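(* Let $A\in\mathcal S_n^+$ have rank $2$. Then $\operatorname{st}_+(A)=2$.
   Context: $\mathcal S_n^+$ is the set of $n\times n$ symmetric entrywise nonnegative real matrices. The SNT-rank $\operatorname{st}_+(A)$ of $A\in\mathcal S_n^+$ is the minimal $k$ such that $A=BCB^T$ with $B$ an entrywise nonnegative $n\times k$ matrix and $C$ a symmetric entrywise nonnegative $k\times k$ matrix. *)

theory Defs
  imports "Jordan_Normal_Form.DL_Rank"
begin

definition nonneg_mat :: "real mat \<Rightarrow> bool" where
  "nonneg_mat M \<longleftrightarrow> (\<forall>i<dim_row M. \<forall>j<dim_col M. M $$ (i, j) \<ge> 0)"

definition sym_nonneg_mat :: "nat \<Rightarrow> real mat \<Rightarrow> bool" where
  "sym_nonneg_mat n A \<longleftrightarrow> A \<in> carrier_mat n n \<and> A\<^sup>T = A \<and> nonneg_mat A"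

definition snt_rank :: "nat \<Rightarrow> real mat \<Rightarrow> nat" where
  "snt_rank n A = (LEAST k. \<exists>B C. B \<in> carrier_mat n k \<and> nonneg_mat B \<and>
      sym_nonneg_mat k C \<and> A = B * C * B\<^sup>T)"

end

theory Submission
  imports Defs
begin

text \<open>The columns of a rank-2 nonnegative matrix lie in a plane, and the nonnegative vectors of
  that plane form a cone generated by two nonnegative vectors \<open>w1, w2\<close>, each vanishing at an index
  where the other does not. Every column is then a nonnegative combination of \<open>w1, w2\<close>, with
  coefficients read off at those two indices; by symmetry the coefficient matrix is itself of the
  form \<open>C [w1 w2]\<^sup>T\<close>, so \<open>A = B C B\<^sup>T\<close> with \<open>B = [w1 w2]\<close>. An inner dimension \<open>\<le> 1\<close> would force
  rank \<open>\<le> 1\<close>.\<close>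

definition multiple_on :: "nat \<Rightarrow> (nat \<Rightarrow> 'a::comm_ring_1) \<Rightarrow> (nat \<Rightarrow> 'a) \<Rightarrow> bool" where
  "multiple_on n u v \<longleftrightarrow> (\<exists>t. \<forall>r<n. u r = t * v r)"

definition in_span2_on :: "nat \<Rightarrow> (nat \<Rightarrow> 'a::comm_ring_1) \<Rightarrow> (nat \<Rightarrow> 'a) \<Rightarrow> (nat \<Rightarrow> 'a) \<Rightarrow> bool" where
  "in_span2_on n u v w \<longleftrightarrow> (\<exists>x y. \<forall>r<n. w r = x * u r + y * v r)"

lemma not_multiple_on_nonzero:
  assumes "\<not> multiple_on n u v"
  obtains r where "r < n" "u r \<noteq> 0"
  using assms unfolding multiple_on_def by (metis mult_zero_left)

lemma multiple_on_sym:
  fixes u v :: "nat \<Rightarrow> 'a::field"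
  assumes "multiple_on n u v" and "r < n" and "u r \<noteq> 0"
  shows "multiple_on n v u"
proof -
  obtain t where t: "\<forall>r<n. u r = t * v r" using assms(1) unfolding multiple_on_def by blast
  have "t \<noteq> 0" using t assms(2,3) by force
  then have "\<forall>r<n. v r = (1 / t) * u r" using t by simp
  then show ?thesis unfolding multiple_on_def by blast
qed

lemma in_span2_on_trans:
  assumes "in_span2_on n w1 w2 u" and "in_span2_on n w1 w2 v" and "in_span2_on n u v f"
  shows "in_span2_on n w1 w2 f"
proof -
  obtain a b where u: "\<forall>r<n. u r = a * w1 r + b * w2 r" using assms(1) unfolding in_span2_on_def by blast
  obtain c d where v: "\<forall>r<n. v r = c * w1 r + d * w2 r" using assms(2) unfolding in_span2_on_def by blast
  obtain x y where f: "\<forall>r<n. f r = x * u r + y * v r" using assms(3) unfolding in_span2_on_def by blast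
  have "\<forall>r<n. f r = (x * a + y * c) * w1 r + (x * b + y * d) * w2 r"
    using u v f by (simp add: algebra_simps)
  then show ?thesis unfolding in_span2_on_def by blast
qed

lemma in_span2_on_coordinates:
  fixes f w1 w2 :: "nat \<Rightarrow> 'a::field"
  assumes "in_span2_on n w1 w2 f" and "i < n" "j < n" "r < n"
    and "w1 i = 0" "w2 i \<noteq> 0" "w2 j = 0" "w1 j \<noteq> 0"
  shows "f r = f j / w1 j * w1 r + f i / w2 i * w2 r"
proof -
  obtain x y where f: "\<forall>r<n. f r = x * w1 r + y * w2 r" using assms(1) unfolding in_span2_on_def by blast
  have "x = f j / w1 j" "y = f i / w2 i" using f assms(2,3,5-8) by auto
  then show ?thesis using f assms(4) by simp
qed

lemma exists_min_ratio:
  fixes u v :: "nat \<Rightarrow> real"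
  assumes "r0 < n" and "v r0 > 0"
  obtains i where "i < n" "v i > 0" "\<And>r. r < n \<Longrightarrow> v r > 0 \<Longrightarrow> u i / v i \<le> u r / v r"
proof -
  define S where "S = (\<lambda>r. u r / v r) ` {r. r < n \<and> v r > 0}"
  have S: "finite S" "S \<noteq> {}" unfolding S_def using assms by auto
  obtain i where "i < n" "v i > 0" "Min S = u i / v i"
    using Min_in[OF S] unfolding S_def by auto
  moreover have "Min S \<le> u r / v r" if "r < n" "v r > 0" for r
    unfolding S_def by (rule Min_le) (use that in auto)
  ultimately show ?thesis using that by auto
qed

text \<open>The two-dimensional cone of nonnegative vectors in the plane spanned by \<open>u\<close> and \<open>v\<close>
  is generated by \<open>w1 = u - t v\<close> and \<open>w2 = v - s u\<close>, where \<open>t\<close> and \<open>s\<close> are the least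
  ratios \<open>u r / v r\<close> and \<open>v r / u r\<close>; each \<open>w\<close> vanishes where its ratio is attained.\<close>
lemma nonneg_plane_extreme_generators:
  fixes u v :: "nat \<Rightarrow> real"
  assumes u_nonneg: "\<And>r. r < n \<Longrightarrow> u r \<ge> 0" and v_nonneg: "\<And>r. r < n \<Longrightarrow> v r \<ge> 0"
    and uv: "\<not> multiple_on n u v" and vu: "\<not> multiple_on n v u"
  obtains w1 w2 i j where "i < n" "j < n" "\<And>r. r < n \<Longrightarrow> w1 r \<ge> 0" "\<And>r. r < n \<Longrightarrow> w2 r \<ge> 0"
    "w1 i = 0" "w2 i > 0" "w2 j = 0" "w1 j > 0"
    "in_span2_on n w1 w2 u" "in_span2_on n w1 w2 v"
proof -
  obtain r0 where r0: "r0 < n" "v r0 > 0"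
    using not_multiple_on_nonzero[OF vu] v_nonneg by (metis less_le)
  obtain r1 where r1: "r1 < n" "u r1 > 0"
    using not_multiple_on_nonzero[OF uv] u_nonneg by (metis less_le)
  obtain i where i: "i < n" "v i > 0" and t_min: "\<And>r. r < n \<Longrightarrow> v r > 0 \<Longrightarrow> u i / v i \<le> u r / v r"
    using exists_min_ratio[of r0 n v u] r0 by blast
  obtain j where j: "j < n" "u j > 0" and s_min: "\<And>r. r < n \<Longrightarrow> u r > 0 \<Longrightarrow> v j / u j \<le> v r / u r"
    using exists_min_ratio[of r1 n u v] r1 by blast
  define t where "t = u i / v i"
  define s where "s = v j / u j"
  define w1 where "w1 r = u r - t * v r" for r
  define w2 where "w2 r = v r - s * u r" for r
  define d where "d = 1 - s * t"
  have t_nonneg: "t \<ge> 0" and s_nonneg: "s \<ge> 0"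
    using i j u_nonneg v_nonneg unfolding t_def s_def by auto
  have w1_nonneg: "w1 r \<ge> 0" if "r < n" for r
    using t_min[OF that] u_nonneg[OF that] v_nonneg[OF that]
    by (cases "v r > 0") (auto simp: w1_def t_def pos_le_divide_eq)
  have w2_nonneg: "w2 r \<ge> 0" if "r < n" for r
    using s_min[OF that] u_nonneg[OF that] v_nonneg[OF that]
    by (cases "u r > 0") (auto simp: w2_def s_def pos_le_divide_eq)
  have w1_i: "w1 i = 0" and w2_j: "w2 j = 0" using i j by (simp_all add: w1_def w2_def t_def s_def)
  have u_eq: "d * u r = w1 r + t * w2 r" and v_eq: "d * v r = s * w1 r + w2 r" for r
    by (simp_all add: w1_def w2_def d_def algebra_simps)
  have d_pos: "d > 0"
  proof (rule ccontr)
    assume "\<not> d > 0"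
    moreover have "d * u j \<ge> 0" using u_eq[of j] w2_j w1_nonneg[OF j(1)] j(2)
      by (simp add: zero_le_mult_iff)
    ultimately have "d = 0" using j(2) by (simp add: zero_le_mult_iff)
    \<comment> \<open>then \<open>w1 + t w2 = 0\<close> with both summands nonnegative forces \<open>u = t v\<close>\<close>
    have "u r = t * v r" if "r < n" for r
    proof -
      have "t * w2 r \<ge> 0" using t_nonneg w2_nonneg[OF that] by simp
      then have "w1 r = 0" using u_eq[of r] \<open>d = 0\<close> w1_nonneg[OF that] by simp
      then show ?thesis by (simp add: w1_def)
    qed
    then show False using uv unfolding multiple_on_def by blast
  qed
  have "\<forall>r<n. u r = (1 / d) * w1 r + (t / d) * w2 r" "\<forall>r<n. v r = (s / d) * w1 r + (1 / d) * w2 r"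
    using u_eq v_eq d_pos by (simp_all add: field_simps)
  then have "in_span2_on n w1 w2 u" "in_span2_on n w1 w2 v"
    unfolding in_span2_on_def by blast+
  moreover have "w2 i = d * v i" "w1 j = d * u j"
    using v_eq[of i] u_eq[of j] w1_i w2_j by simp_all
  then have "w2 i > 0" "w1 j > 0" using d_pos i(2) j(2) by simp_all
  ultimately show ?thesis
    using that i(1) j(1) w1_nonneg w2_nonneg w1_i w2_j by blast
qed

lemma (in vec_space) three_vecs_lin_indpt:
  fixes u v w :: "nat \<Rightarrow> 'a"
  assumes uv: "\<not> multiple_on n u v" and vu: "\<not> multiple_on n v u" and w: "\<not> in_span2_on n u v w"
  shows "lin_indpt {vec n u, vec n v, vec n w}" (is "lin_indpt ?S")
    and "card {vec n u, vec n v, vec n w} = 3"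
proof -
  have vec_eq: "vec n f = vec n g \<Longrightarrow> r < n \<Longrightarrow> f r = g r" for f g :: "nat \<Rightarrow> 'a" and r
    by (metis index_vec)
  have "\<not> (\<forall>r<n. u r = 1 * v r)" "\<not> (\<forall>r<n. w r = 1 * u r + 0 * v r)" "\<not> (\<forall>r<n. w r = 0 * u r + 1 * v r)"
    using uv w unfolding multiple_on_def in_span2_on_def by blast+
  then have distinct: "vec n u \<noteq> vec n v" "vec n w \<noteq> vec n u" "vec n w \<noteq> vec n v"
    using vec_eq by auto
  then show "card ?S = 3" by auto
  show "lin_indpt ?S"
  proof (rule finite_lin_indpt2)
    fix a :: "'a vec \<Rightarrow> 'a"
    assume "lincomb a ?S = 0\<^sub>v n"
    then have sum_zero: "(\<Sum>x\<in>?S. a x * x $ r) = 0" if "r < n" for r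
      using lincomb_index[OF that, of ?S a] that by auto
    define x y z where "x = a (vec n u)" and "y = a (vec n v)" and "z = a (vec n w)"
    have rel: "x * u r + y * v r + z * w r = 0" if "r < n" for r
      using sum_zero[OF that] distinct that unfolding x_def y_def z_def by (simp add: algebra_simps)
    have "z = 0"
    proof (rule ccontr)
      assume "z \<noteq> 0"
      then have "\<forall>r<n. w r = (- x / z) * u r + (- y / z) * v r"
        using rel by (simp add: field_simps add_eq_0_iff)
      then show False using w unfolding in_span2_on_def by blast
    qed
    moreover have "y = 0"
    proof (rule ccontr)
      assume "y \<noteq> 0"
      then have "\<forall>r<n. v r = (- x / y) * u r"
        using rel \<open>z = 0\<close> by (simp add: field_simps add_eq_0_iff)
      then show False using vu unfolding multiple_on_def by blast
    qed
    moreover have "x = 0"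
    proof (rule ccontr)
      assume "x \<noteq> 0"
      then have "\<forall>r<n. u r = 0 * v r"
        using rel \<open>z = 0\<close> \<open>y = 0\<close> by simp
      then show False using uv unfolding multiple_on_def by blast
    qed
    ultimately show "\<forall>x\<in>?S. a x = 0" unfolding x_def y_def z_def by simp
  qed auto
qed

lemma rank_ge_3_of_cols:
  fixes A :: "'a::field mat"
  assumes A: "A \<in> carrier_mat n nc" and "p < nc" "q < nc" "c < nc"
    and "\<not> multiple_on n (\<lambda>r. A $$ (r, p)) (\<lambda>r. A $$ (r, q))"
    and "\<not> multiple_on n (\<lambda>r. A $$ (r, q)) (\<lambda>r. A $$ (r, p))"
    and "\<not> in_span2_on n (\<lambda>r. A $$ (r, p)) (\<lambda>r. A $$ (r, q)) (\<lambda>r. A $$ (r, c))"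
  shows "3 \<le> vec_space.rank n A"
proof -
  have col: "col A k = vec n (\<lambda>r. A $$ (r, k))" and "col A k \<in> set (cols A)" if "k < nc" for k
    using A that by (auto simp: col_def cols_def)
  then have "{col A p, col A q, col A c} \<subseteq> set (cols A)" using assms(2-4) by auto
  with vec_space.rank_ge_card_indpt[OF A] vec_space.three_vecs_lin_indpt[OF assms(5-7)]
  show ?thesis unfolding col[OF assms(2)] col[OF assms(3)] col[OF assms(4)] by metis
qed

lemma rank_2_spanning_cols:
  fixes A :: "'a::field mat"
  assumes A: "A \<in> carrier_mat n nc" and rank: "vec_space.rank n A = 2"
  obtains p q where "p < nc" "q < nc"
    "\<not> multiple_on n (\<lambda>r. A $$ (r, p)) (\<lambda>r. A $$ (r, q))"
    "\<not> multiple_on n (\<lambda>r. A $$ (r, q)) (\<lambda>r. A $$ (r, p))"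
    "\<And>c. c < nc \<Longrightarrow> in_span2_on n (\<lambda>r. A $$ (r, p)) (\<lambda>r. A $$ (r, q)) (\<lambda>r. A $$ (r, c))"
proof -
  have rank_le_1: "vec_space.rank n A \<le> 1" if "\<And>r c. r < n \<Longrightarrow> c < nc \<Longrightarrow> A $$ (r, c) = f r * g c" for f g
    using vec_space.rank_le_1_product_entries[OF A] A that by auto
  obtain p r0 where p: "p < nc" "r0 < n" "A $$ (r0, p) \<noteq> 0"
    using rank_le_1[of "\<lambda>_. 0" "\<lambda>_. 0"] rank by force
  have "\<exists>q<nc. \<not> multiple_on n (\<lambda>r. A $$ (r, q)) (\<lambda>r. A $$ (r, p))"
  proof (rule ccontr)
    assume "\<not> ?thesis"
    then have "\<forall>q. \<exists>t. q < nc \<longrightarrow> (\<forall>r<n. A $$ (r, q) = t * A $$ (r, p))"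
      unfolding multiple_on_def by blast
    then obtain g where "\<And>q r. q < nc \<Longrightarrow> r < n \<Longrightarrow> A $$ (r, q) = A $$ (r, p) * g q"
      by (metis mult.commute)
    then show False using rank_le_1 rank by fastforce
  qed
  then obtain q where q: "q < nc" and qp: "\<not> multiple_on n (\<lambda>r. A $$ (r, q)) (\<lambda>r. A $$ (r, p))"
    by blast
  have pq: "\<not> multiple_on n (\<lambda>r. A $$ (r, p)) (\<lambda>r. A $$ (r, q))"
    using multiple_on_sym[of n "\<lambda>r. A $$ (r, p)"] p qp by blast
  have "in_span2_on n (\<lambda>r. A $$ (r, p)) (\<lambda>r. A $$ (r, q)) (\<lambda>r. A $$ (r, c))" if "c < nc" for c
    using rank_ge_3_of_cols[OF A p(1) q that pq qp] rank by linarith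
  then show ?thesis by (rule that[OF p(1) q pq qp])
qed

lemma rank_le_1_if_inner_dim_le_1:
  fixes B C :: "'a::field mat"
  assumes B: "B \<in> carrier_mat n k" and C: "C \<in> carrier_mat k k" and k: "k \<le> 1"
  shows "vec_space.rank n (B * C * B\<^sup>T) \<le> 1"
proof (rule vec_space.rank_le_1_product_entries)
  show "B * C * B\<^sup>T \<in> carrier_mat n n" using B C by auto
  fix r c assume "r < dim_row (B * C * B\<^sup>T)" "c < dim_col (B * C * B\<^sup>T)"
  then show "(B * C * B\<^sup>T) $$ (r, c) =
      (if k = 1 then B $$ (r, 0) else 0) * (if k = 1 then C $$ (0, 0) * B $$ (c, 0) else 0)"
    using B C k by (cases k) (auto simp: scalar_prod_def)
qed

lemma index_mult_mult_transpose_mat: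
  fixes B C :: "'a::comm_semiring_0 mat"
  assumes "B \<in> carrier_mat n k" and "C \<in> carrier_mat k k" and "r < n" and "c < n"
  shows "(B * C * B\<^sup>T) $$ (r, c) = (\<Sum>a<k. B $$ (r, a) * (\<Sum>b<k. C $$ (a, b) * B $$ (c, b)))"
  using assms by (simp add: scalar_prod_def atLeast0LessThan)

text \<open>Reading off the coordinates of the columns at \<open>j\<close> and \<open>i\<close> and using symmetry once more
  gives \<open>C\<close> as the rescaled principal submatrix of \<open>A\<close> on \<open>{j, i}\<close>.\<close>
lemma sym_nonneg_mat_factor_2:
  fixes A :: "real mat" and w1 w2 :: "nat \<Rightarrow> real"
  assumes A: "sym_nonneg_mat n A" and ij: "i < n" "j < n"
    and w_nonneg: "\<And>r. r < n \<Longrightarrow> w1 r \<ge> 0" "\<And>r. r < n \<Longrightarrow> w2 r \<ge> 0"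
    and w: "w1 i = 0" "w2 i > 0" "w2 j = 0" "w1 j > 0"
    and span: "\<And>c. c < n \<Longrightarrow> in_span2_on n w1 w2 (\<lambda>r. A $$ (r, c))"
  obtains B C where "B \<in> carrier_mat n 2" "nonneg_mat B" "sym_nonneg_mat 2 C" "A = B * C * B\<^sup>T"
proof -
  have A_carrier: "A \<in> carrier_mat n n" and A_sym: "\<And>r c. r < n \<Longrightarrow> c < n \<Longrightarrow> A $$ (c, r) = A $$ (r, c)"
    and A_nonneg: "\<And>r c. r < n \<Longrightarrow> c < n \<Longrightarrow> A $$ (r, c) \<ge> 0"
    using A unfolding sym_nonneg_mat_def nonneg_mat_def by (auto, metis index_transpose_mat(1) carrier_matD)
  have coord: "A $$ (r, c) = A $$ (j, c) / w1 j * w1 r + A $$ (i, c) / w2 i * w2 r" if "r < n" "c < n" for r c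
    using in_span2_on_coordinates[OF span[OF that(2)] ij that(1)] w by simp
  define c11 where "c11 = A $$ (j, j) / (w1 j * w1 j)"
  define c12 where "c12 = A $$ (i, j) / (w1 j * w2 i)"
  define c22 where "c22 = A $$ (i, i) / (w2 i * w2 i)"
  define B where "B = mat n 2 (\<lambda>(r, a). if a = 0 then w1 r else w2 r)"
  define C where "C = mat 2 2 (\<lambda>(a, b). if a = 0 \<and> b = 0 then c11 else if a = 1 \<and> b = 1 then c22 else c12)"
  have B: "B \<in> carrier_mat n 2" and C: "C \<in> carrier_mat 2 2" unfolding B_def C_def by simp_all
  have "nonneg_mat B" unfolding nonneg_mat_def B_def using w_nonneg by auto
  moreover have "sym_nonneg_mat 2 C"
    unfolding sym_nonneg_mat_def nonneg_mat_def
    using C A_nonneg ij w by (auto intro!: eq_matI simp: C_def c11_def c12_def c22_def less_2_cases_iff)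
  moreover have "A = B * C * B\<^sup>T"
  proof (rule eq_matI)
    fix r c assume "r < dim_row (B * C * B\<^sup>T)" "c < dim_col (B * C * B\<^sup>T)"
    then have rc: "r < n" "c < n" using B by auto
    have row_j: "A $$ (j, c) = A $$ (j, j) / w1 j * w1 c + A $$ (i, j) / w2 i * w2 c"
      using coord[OF rc(2) ij(2)] A_sym[OF ij(2) rc(2)] by simp
    have row_i: "A $$ (i, c) = A $$ (i, j) / w1 j * w1 c + A $$ (i, i) / w2 i * w2 c"
      using coord[OF rc(2) ij(1)] A_sym[OF ij(1) rc(2)] A_sym[OF ij] by simp
    have "A $$ (r, c) = w1 r * (c11 * w1 c + c12 * w2 c) + w2 r * (c12 * w1 c + c22 * w2 c)"
      using w unfolding coord[OF rc] row_j row_i c11_def c12_def c22_def by (simp add: field_simps)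
    then show "A $$ (r, c) = (B * C * B\<^sup>T) $$ (r, c)"
      unfolding index_mult_mult_transpose_mat[OF B C rc]
      using rc by (simp add: numeral_2_eq_2 lessThan_Suc B_def C_def algebra_simps)
  qed (use A_carrier B C in auto)
  ultimately show ?thesis using that B by blast
qed

theorem mainTheorem6:
  fixes A :: "real mat" and n :: nat
  assumes "sym_nonneg_mat n A"
    and "vec_space.rank n A = 2"
  shows "snt_rank n A = 2"
proof -
  have A: "A \<in> carrier_mat n n" and A_nonneg: "\<And>r c. r < n \<Longrightarrow> c < n \<Longrightarrow> A $$ (r, c) \<ge> 0"
    using assms(1) unfolding sym_nonneg_mat_def nonneg_mat_def by auto
  obtain p q where pq: "p < n" "q < n"
    "\<not> multiple_on n (\<lambda>r. A $$ (r, p)) (\<lambda>r. A $$ (r, q))"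
    "\<not> multiple_on n (\<lambda>r. A $$ (r, q)) (\<lambda>r. A $$ (r, p))"
    and cols: "\<And>c. c < n \<Longrightarrow> in_span2_on n (\<lambda>r. A $$ (r, p)) (\<lambda>r. A $$ (r, q)) (\<lambda>r. A $$ (r, c))"
    using rank_2_spanning_cols[OF A assms(2)] by blast
  obtain w1 w2 i j where w: "i < n" "j < n" "\<And>r. r < n \<Longrightarrow> w1 r \<ge> 0" "\<And>r. r < n \<Longrightarrow> w2 r \<ge> 0"
    "w1 i = 0" "w2 i > 0" "w2 j = 0" "w1 j > 0"
    and pq_span: "in_span2_on n w1 w2 (\<lambda>r. A $$ (r, p))" "in_span2_on n w1 w2 (\<lambda>r. A $$ (r, q))"
    by (rule nonneg_plane_extreme_generators[of n "\<lambda>r. A $$ (r, p)" "\<lambda>r. A $$ (r, q)"])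
      (use A_nonneg pq in auto)
  obtain B C where "B \<in> carrier_mat n 2" "nonneg_mat B" "sym_nonneg_mat 2 C" "A = B * C * B\<^sup>T"
    by (rule sym_nonneg_mat_factor_2[OF assms(1) w]) (use in_span2_on_trans[OF pq_span cols] in auto)
  then show ?thesis
    unfolding snt_rank_def
  proof (intro Least_equality, blast)
    fix k assume "\<exists>B C. B \<in> carrier_mat n k \<and> nonneg_mat B \<and> sym_nonneg_mat k C \<and> A = B * C * B\<^sup>T"
    then obtain B' C' where "B' \<in> carrier_mat n k" "C' \<in> carrier_mat k k" "A = B' * C' * B'\<^sup>T"
      unfolding sym_nonneg_mat_def by blast
    then show "2 \<le> k"
      using rank_le_1_if_inner_dim_le_1[of B' n k C'] assms(2) by (cases "k \<le> 1") auto
  qed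
qed

end
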